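(* Let $q$ be a prime and $1\le K<N$ with $q^K>2$. Let $G$ ($K\times N$) and $\mathbf{v}\in\mathbb{F}_q^N$ have independent uniformly distributed entries in $\mathbb{F}_q$, and for each message index $m$ let $\mathbf{x}_m=\mathbf{u}_mG+\mathbf{v}$, where $\mathbf{u}_m\in\mathbb{F}_q^K$ is the $q$-ary representation of $m$. Let $P_N(\mathbf{y}\mid\mathbf{x})$ be a channel transition probability from inputs $\mathbf{x}\in\mathbb{F}_q^N$ to outputs $\mathbf{y}$ in a finite set. For an input $\mathbf{x}$ and output $\mathbf{y}$ let $A(\mathbf{x},\mathbf{y})=\{\mathbf{x}'\in\mathbb{F}_q^N: P_N(\mathbf{y}\mid\mathbf{x}')\ge P_N(\mathbf{y}\mid\mathbf{x})\}$. Let $m,m',m''$ be distinct indices, fix a value $\mathbf{x}_m\in\mathbb{F}_q^N$ of the codeword of index $m$ and an output $\mathbf{y}$, and let $A_{j}(\mathbf{x}_m,\mathbf{y})$ denote the event $\{\mathbf{x}_j\in A(\mathbf{x}_m,\mathbf{y})\}$, probabilities being taken over the ensemble conditioned on the codeword of index $m$ being $\mathbf{x}_m$. Let $\alpha=\Pr(A_{m'}(\mathbf{x}_m,\mathbf{y}))$. Then: (i) if $\mathbf{u}_m\notin\mathrm{span}^*(\mathbf{u}_{m'},\mathbf{u}_{m''})$, then $\Pr(A_{m'}(\mathbf{x}_m,\mathbf{y})\cap A_{m''}(\mathbf{x}_m,\mathbf{y}))=\alpha^2$; (ii) if $\mathbf{u}_m\in\mathrm{span}^*(\mathbf{u}_{m'},\mathbf{u}_{m''})$,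 then $\Pr(A_{m'}(\mathbf{x}_m,\mathbf{y})\cap A_{m''}(\mathbf{x}_m,\mathbf{y}))\le\alpha$. Moreover $|\mathrm{span}^*(\mathbf{u}_{m'},\mathbf{u}_{m''})|=q$.
   Context: All operations are mod $q$. $\mathrm{span}^*(\mathbf{w}_1,\mathbf{w}_2)=\mathbf{w}_1+\mathrm{span}(\mathbf{w}_2-\mathbf{w}_1)$, the affine line through $\mathbf{w}_1,\mathbf{w}_2$ in $\mathbb{F}_q^K$. *)

theory Defs
  imports Complex_Main "HOL-Computational_Algebra.Primes"
begin

text \<open>Elements of F_q are naturals below q; vectors of length n over F_q are
functions nat => nat with entries below q at positions < n and 0 elsewhere.\<close>

definition vecs :: "nat \<Rightarrow> nat \<Rightarrow> (nat \<Rightarrow> nat) set" where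
  "vecs q n = {v. (\<forall>i<n. v i < q) \<and> (\<forall>i\<ge>n. v i = 0)}"

definition mats :: "nat \<Rightarrow> nat \<Rightarrow> nat \<Rightarrow> (nat \<Rightarrow> nat \<Rightarrow> nat) set" where
  "mats q K N = {G. \<forall>i j. (i < K \<and> j < N \<longrightarrow> G i j < q) \<and>
                          (\<not> (i < K \<and> j < N) \<longrightarrow> G i j = 0)}"

definition qrep :: "nat \<Rightarrow> nat \<Rightarrow> nat \<Rightarrow> (nat \<Rightarrow> nat)" where
  "qrep q K m = (\<lambda>i. if i < K then (m div q ^ i) mod q else 0)"

definition encode :: "nat \<Rightarrow> nat \<Rightarrow> nat \<Rightarrow> (nat \<Rightarrow> nat \<Rightarrow> nat) \<Rightarrow> (nat \<Rightarrow> nat)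
                      \<Rightarrow> (nat \<Rightarrow> nat) \<Rightarrow> (nat \<Rightarrow> nat)" where
  "encode q K N G v u = (\<lambda>j. if j < N then ((\<Sum>i<K. u i * G i j) + v j) mod q else 0)"

definition ensemble :: "nat \<Rightarrow> nat \<Rightarrow> nat \<Rightarrow> ((nat \<Rightarrow> nat \<Rightarrow> nat) \<times> (nat \<Rightarrow> nat)) set" where
  "ensemble q K N = mats q K N \<times> vecs q N"

definition cond_prob :: "nat \<Rightarrow> nat \<Rightarrow> nat \<Rightarrow> nat \<Rightarrow> (nat \<Rightarrow> nat)
     \<Rightarrow> ((nat \<Rightarrow> nat \<Rightarrow> nat) \<Rightarrow> (nat \<Rightarrow> nat) \<Rightarrow> bool) \<Rightarrow> real" where
  "cond_prob q K N m x0 E =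
     (let C = {(G, v) \<in> ensemble q K N. encode q K N G v (qrep q K m) = x0}
      in real (card {(G, v) \<in> C. E G v}) / real (card C))"

text \<open>A(x,y) = {x' in F_q^N. P(y|x') >= P(y|x)}; P x y stands for P_N(y|x).\<close>
definition Aset :: "nat \<Rightarrow> nat \<Rightarrow> ((nat \<Rightarrow> nat) \<Rightarrow> 'y \<Rightarrow> real) \<Rightarrow> (nat \<Rightarrow> nat) \<Rightarrow> 'y
                    \<Rightarrow> (nat \<Rightarrow> nat) set" where
  "Aset q N P x y = {x' \<in> vecs q N. P x' y \<ge> P x y}"

text \<open>span*(w1,w2) = w1 + span(w2 - w1), all mod q, in F_q^K.\<close>
definition span_star :: "nat \<Rightarrow> nat \<Rightarrow> (nat \<Rightarrow> nat) \<Rightarrow> (nat \<Rightarrow> nat) \<Rightarrow> (nat \<Rightarrow> nat) set" where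
  "span_star q K w1 w2 =
     {(\<lambda>i. if i < K then (w1 i + c * (w2 i + (q - w1 i))) mod q else 0) | c. c < q}"

end

theory Submission
  imports Defs "HOL-Number_Theory.Cong" "HOL-Library.FuncSet"
begin

text \<open>Conditioning on \<open>x\<^sub>m = x\<^sub>0\<close> fixes \<open>v = x\<^sub>0 - u\<^sub>m G\<close>, so the other codewords are
\<open>x\<^sub>0 + (u\<^sub>j - u\<^sub>m) G\<close>. If \<open>u\<^sub>m\<close> is off the affine line through \<open>u\<^sub>m\<^sub>'\<close> and \<open>u\<^sub>m\<^sub>'\<^sub>'\<close>,
the differences \<open>a = u\<^sub>m\<^sub>' - u\<^sub>m\<close> and \<open>b = u\<^sub>m\<^sub>'\<^sub>' - u\<^sub>m\<close> are linearly independent, so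
some \<open>2 \<times> 2\<close> minor of \<open>(a; b)\<close> is nonzero mod \<open>q\<close>. By Cramer's rule a translation of
\<open>(G, v)\<close> supported on the two rows of that minor (plus a compensating shift of \<open>v\<close>) keeps
\<open>x\<^sub>m\<close> fixed and moves \<open>(x\<^sub>m\<^sub>', x\<^sub>m\<^sub>'\<^sub>')\<close> to any prescribed pair. Translations are
injective, so all fibres of \<open>(x\<^sub>m\<^sub>', x\<^sub>m\<^sub>'\<^sub>')\<close> have the same size: the pair is uniform
on \<open>F\<^sub>q\<^sup>N \<times> F\<^sub>q\<^sup>N\<close> and the two events are independent. Part (ii) is monotonicity,
and \<open>span\<^sup>*\<close> has \<open>q\<close> points because \<open>c \<mapsto> u\<^sub>m\<^sub>' + c (u\<^sub>m\<^sub>'\<^sub>' - u\<^sub>m\<^sub>')\<close> is injective.\<close>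

lemma cong_int_less_imp_eq:
  fixes a b q :: nat
  assumes "[int a = int b] (mod int q)" "a < q" "b < q"
  shows "a = b"
  using assms by (simp add: cong_int_iff cong_less_modulus_unique_nat)

lemma mod_eq_if_cong_int:
  fixes x w q :: nat
  assumes "[int x = int w] (mod int q)" "w < q"
  shows "x mod q = w"
  using assms by (metis cong_int_iff cong_def mod_less)

lemma coprime_if_not_cong_zero:
  fixes x :: int
  assumes "prime q" "\<not> [x = 0] (mod int q)"
  shows "coprime x (int q)"
  using assms prime_imp_coprime[of "int q" x] by (simp add: cong_0_iff coprime_commute)

lemma cong_inverse_prime:
  fixes x :: int
  assumes "prime q" "\<not> [x = 0] (mod int q)"
  obtains y where "[x * y = 1] (mod int q)"
  using cong_solve_coprime_int[OF coprime_if_not_cong_zero[OF assms]] by blast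

lemma add_mod_cancel_less:
  fixes a b d q :: nat
  assumes "(a + d) mod q = (b + d) mod q" "a < q" "b < q"
  shows "a = b"
  using assms by (metis cong_add_rcancel_nat cong_def cong_less_modulus_unique_nat)

lemma cramer_cong:
  fixes a b c d s t :: int
  assumes "prime q" "\<not> [a * d = b * c] (mod int q)"
  obtains x y where "[a * x + b * y = s] (mod int q)" "[c * x + d * y = t] (mod int q)"
proof -
  have "\<not> [a * d - b * c = 0] (mod int q)"
    using assms(2) by (simp add: cong_iff_dvd_diff)
  then obtain e where e: "[(a * d - b * c) * e = 1] (mod int q)"
    using cong_inverse_prime[OF assms(1)] by blast
  define x where "x = (d * s - b * t) * e"
  define y where "y = (a * t - c * s) * e"
  have "[a * x + b * y = ((a * d - b * c) * e) * s] (mod int q)"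
       "[c * x + d * y = ((a * d - b * c) * e) * t] (mod int q)"
    unfolding x_def y_def by (simp_all add: algebra_simps)
  moreover have "[((a * d - b * c) * e) * s = s] (mod int q)"
                "[((a * d - b * c) * e) * t = t] (mod int q)"
    using cong_scalar_right[OF e] by simp_all
  ultimately show ?thesis
    using that cong_trans by blast
qed

definition line_point :: "nat \<Rightarrow> nat \<Rightarrow> (nat \<Rightarrow> nat) \<Rightarrow> (nat \<Rightarrow> nat) \<Rightarrow> nat \<Rightarrow> (nat \<Rightarrow> nat)" where
  "line_point q K v w c = (\<lambda>i. if i < K then (v i + c * (w i + (q - v i))) mod q else 0)"

lemma span_star_eq_image: "span_star q K v w = line_point q K v w ` {..<q}"
  unfolding span_star_def line_point_def by auto

lemma line_point_cong:
  assumes "i < K" "v i < q"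
  shows "[int (line_point q K v w c i) = int (v i) + int c * (int (w i) - int (v i))] (mod int q)"
proof -
  let ?x = "v i + c * (w i + (q - v i))"
  have mod_x: "[int (line_point q K v w c i) = int ?x] (mod int q)"
    using assms(1) unfolding line_point_def by (simp add: cong_def of_nat_mod)
  have "int (w i + (q - v i)) = int (w i) - int (v i) + int q"
    using assms(2) by simp
  then have "int ?x = int (v i) + int c * (int (w i) - int (v i)) + int c * int q"
    unfolding of_nat_add of_nat_mult by (simp add: algebra_simps)
  then have "[int ?x = int (v i) + int c * (int (w i) - int (v i))] (mod int q)"
    by (simp add: cong_iff_dvd_diff)
  with mod_x show ?thesis by (rule cong_trans)
qed

lemma vecs_neq_imp_less: "w \<in> vecs q K \<Longrightarrow> w' \<in> vecs q K \<Longrightarrow> w i \<noteq> w' i \<Longrightarrow> i < K"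
  unfolding vecs_def by (cases "i < K") auto

lemma card_span_star:
  assumes "prime q" "w1 \<in> vecs q K" "w2 \<in> vecs q K" "w1 \<noteq> w2"
  shows "card (span_star q K w1 w2) = q"
proof -
  obtain i where i: "w1 i \<noteq> w2 i" using assms(4) by auto
  have iK: "i < K" using vecs_neq_imp_less[OF assms(2,3) i] .
  have bounds: "w1 i < q" "w2 i < q" using assms(2,3) iK by (auto simp: vecs_def)
  have "\<not> [int (w2 i) - int (w1 i) = 0] (mod int q)"
    using i cong_int_less_imp_eq[OF _ bounds(2,1)] by (auto simp: cong_iff_dvd_diff)
  then have coprime: "coprime (int (w2 i) - int (w1 i)) (int q)"
    using coprime_if_not_cong_zero[OF assms(1)] by blast
  have "inj_on (line_point q K w1 w2) {..<q}"
  proof (rule inj_onI)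
    fix c1 c2 assume c: "c1 \<in> {..<q}" "c2 \<in> {..<q}" "line_point q K w1 w2 c1 = line_point q K w1 w2 c2"
    have "[int (w1 i) + int c1 * (int (w2 i) - int (w1 i)) = int (w1 i) + int c2 * (int (w2 i) - int (w1 i))] (mod int q)"
      using line_point_cong[where v=w1 and w=w2 and c=c1, OF iK bounds(1)]
        line_point_cong[where v=w1 and w=w2 and c=c2, OF iK bounds(1)] c(3)
      by (simp add: cong_def)
    then have "[int c1 = int c2] (mod int q)"
      by (simp add: cong_add_lcancel cong_mult_rcancel[OF coprime])
    then show "c1 = c2" using cong_int_less_imp_eq c(1,2) by simp
  qed
  then show ?thesis by (simp add: span_star_eq_image card_image)
qed

lemma proportional_if_minors_vanish:
  fixes a b :: "nat \<Rightarrow> int"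
  assumes "prime q" "i0 < K" "\<not> [a i0 = 0] (mod int q)"
    and minors: "\<And>i k. i < K \<Longrightarrow> k < K \<Longrightarrow> [a i * b k = a k * b i] (mod int q)"
  obtains l where "\<And>k. k < K \<Longrightarrow> [b k = l * a k] (mod int q)"
proof -
  obtain y where y: "[a i0 * y = 1] (mod int q)"
    using cong_inverse_prime[OF assms(1,3)] by blast
  have "[b k = (b i0 * y) * a k] (mod int q)" if "k < K" for k
  proof -
    have "[b k = (a i0 * y) * b k] (mod int q)"
      using cong_sym[OF cong_scalar_right[OF y, of "b k"]] by simp
    also have "(a i0 * y) * b k = y * (a i0 * b k)" by simp
    also have "[y * (a i0 * b k) = y * (a k * b i0)] (mod int q)"
      using minors[OF assms(2) that] by (rule cong_scalar_left)
    also have "y * (a k * b i0) = (b i0 * y) * a k" by simp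
    finally show ?thesis .
  qed
  then show ?thesis using that by blast
qed

lemma in_span_star_if_proportional:
  fixes um u1 u2 :: "nat \<Rightarrow> nat" and l :: int
  defines "a \<equiv> \<lambda>i. int (u1 i) - int (um i)" and "b \<equiv> \<lambda>i. int (u2 i) - int (um i)"
  assumes prime: "prime q" and u: "um \<in> vecs q K" "u1 \<in> vecs q K" "u2 \<in> vecs q K"
    and "u1 \<noteq> u2" and l: "\<And>k. k < K \<Longrightarrow> [b k = l * a k] (mod int q)"
  shows "um \<in> span_star q K u1 u2"
proof -
  have bounds: "\<And>i. i < K \<Longrightarrow> um i < q \<and> u1 i < q \<and> u2 i < q"
    using u by (auto simp: vecs_def)
  have "\<not> [1 - l = 0] (mod int q)"
  proof
    assume "[1 - l = 0] (mod int q)"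
    then have "[l = 1] (mod int q)" by (simp add: cong_iff_dvd_diff dvd_diff_commute)
    have "u2 k = u1 k" for k
    proof (rule ccontr)
      assume "u2 k \<noteq> u1 k"
      then have k: "k < K" by (rule vecs_neq_imp_less[OF u(3,2)])
      have "[b k = 1 * a k] (mod int q)"
        using cong_trans[OF l[OF k] cong_scalar_right[OF \<open>[l = 1] (mod int q)\<close>]] .
      then have "[int (u2 k) = int (u1 k)] (mod int q)" by (simp add: a_def b_def cong_iff_dvd_diff)
      then show False using \<open>u2 k \<noteq> u1 k\<close> cong_int_less_imp_eq bounds[OF k] by blast
    qed
    then show False using \<open>u1 \<noteq> u2\<close> by auto
  qed
  then obtain z where z: "[(1 - l) * z = 1] (mod int q)"
    using cong_inverse_prime[OF prime] by blast
  define c where "c = nat (z mod int q)"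
  have cq: "c < q" and cz: "[int c = z] (mod int q)"
    using prime_gt_0_nat[OF prime] unfolding c_def by (simp_all add: nat_less_iff cong_def)
  have "line_point q K u1 u2 c = um"
  proof
    fix i show "line_point q K u1 u2 c i = um i"
    proof (cases "i < K")
      case True
      have "[int (line_point q K u1 u2 c i) = int (um i) + a i + int c * (b i - a i)] (mod int q)"
        using line_point_cong[where v=u1 and q=q and w=u2 and c=c, OF True] bounds[OF True]
        unfolding a_def b_def by (simp add: algebra_simps)
      also have "[int (um i) + a i + int c * (b i - a i) = int (um i) + a i * (1 - (1 - l) * z)] (mod int q)"
      proof -
        have "[int c * (b i - a i) = z * (l * a i - a i)] (mod int q)"
          using cong_mult[OF cz cong_diff[OF l[OF True] cong_refl]] .
        from cong_add[OF cong_refl[of "int (um i) + a i"] this] show ?thesis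
          by (simp add: algebra_simps)
      qed
      also have "[int (um i) + a i * (1 - (1 - l) * z) = int (um i) + a i * (1 - 1)] (mod int q)"
        by (rule cong_add[OF cong_refl cong_mult[OF cong_refl cong_diff[OF cong_refl z]]])
      finally have "[int (line_point q K u1 u2 c i) = int (um i)] (mod int q)" by simp
      moreover have "line_point q K u1 u2 c i < q"
        using prime_gt_0_nat[OF prime] True by (simp add: line_point_def)
      ultimately show ?thesis using cong_int_less_imp_eq bounds[OF True] by blast
    next
      case False then show ?thesis using u(1) by (simp add: line_point_def vecs_def)
    qed
  qed
  then show ?thesis using cq by (auto simp: span_star_eq_image)
qed

lemma nonzero_minor_if_not_in_span_star:
  assumes "prime q" "um \<in> vecs q K" "u1 \<in> vecs q K" "u2 \<in> vecs q K"
    and "um \<notin> span_star q K u1 u2" "um \<noteq> u1" "u1 \<noteq> u2"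
  defines "a \<equiv> \<lambda>i. int (u1 i) - int (um i)" and "b \<equiv> \<lambda>i. int (u2 i) - int (um i)"
  shows "\<exists>i k. i < K \<and> k < K \<and> \<not> [a i * b k = a k * b i] (mod int q)"
proof (rule ccontr)
  assume "\<not> ?thesis"
  then have minors: "\<And>i k. i < K \<Longrightarrow> k < K \<Longrightarrow> [a i * b k = a k * b i] (mod int q)" by blast
  obtain i0 where ne: "um i0 \<noteq> u1 i0" using assms(6) by auto
  have i0: "i0 < K" using vecs_neq_imp_less[OF assms(2,3) ne] .
  have "u1 i0 < q" "um i0 < q" using assms(2,3) i0 by (auto simp: vecs_def)
  then have "\<not> [int (u1 i0) = int (um i0)] (mod int q)"
    using ne cong_int_less_imp_eq[of "u1 i0" "um i0" q] by auto
  then have "\<not> [a i0 = 0] (mod int q)" by (simp add: a_def cong_iff_dvd_diff)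
  then obtain l where "\<And>k. k < K \<Longrightarrow> [b k = l * a k] (mod int q)"
    using proportional_if_minors_vanish[where a=a and b=b, OF assms(1) i0 _ minors] by blast
  then show False
    using in_span_star_if_proportional[OF assms(1-4,7)] assms(5) unfolding a_def b_def by blast
qed

lemma card_preimage_eq_mult:
  assumes "finite C" "finite T" "\<And>w. w \<in> T \<Longrightarrow> card {x \<in> C. f x = w} = c"
  shows "card {x \<in> C. f x \<in> T} = card T * c"
proof -
  have "{x \<in> C. f x \<in> T} = (\<Union>w\<in>T. {x \<in> C. f x = w})" by auto
  then have "card {x \<in> C. f x \<in> T} = (\<Sum>w\<in>T. card {x \<in> C. f x = w})"
    using assms(1,2) by (auto intro: card_UN_disjoint)
  also have "\<dots> = card T * c" using assms(3) by simp
  finally show ?thesis .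
qed

lemma ratio_pair_preimage_eq_sq:
  fixes f1 f2 :: "'a \<Rightarrow> 'b"
  assumes "finite C" "finite V" "S \<subseteq> V" "\<And>x. x \<in> C \<Longrightarrow> f1 x \<in> V \<and> f2 x \<in> V"
    and "\<And>w1 w2. w1 \<in> V \<Longrightarrow> w2 \<in> V \<Longrightarrow> card {x \<in> C. f1 x = w1 \<and> f2 x = w2} = c"
  shows "real (card {x \<in> C. f1 x \<in> S \<and> f2 x \<in> S}) / real (card C)
       = (real (card {x \<in> C. f1 x \<in> S}) / real (card C))\<^sup>2"
proof -
  have count: "card {x \<in> C. (f1 x, f2 x) \<in> T} = card T * c" if "T \<subseteq> V \<times> V" for T
    using that assms(1,2,5) finite_subset[OF that]
    by (intro card_preimage_eq_mult) (auto simp: subset_iff)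
  have "card {x \<in> C. f1 x \<in> S \<and> f2 x \<in> S} = card S * card S * c"
    using count[of "S \<times> S"] assms(3) by (auto simp: card_cartesian_product)
  moreover have "card {x \<in> C. f1 x \<in> S} = card S * card V * c"
  proof -
    have "{x \<in> C. f1 x \<in> S} = {x \<in> C. (f1 x, f2 x) \<in> S \<times> V}" using assms(4) by auto
    then show ?thesis using count[of "S \<times> V"] assms(3) by (auto simp: card_cartesian_product)
  qed
  moreover have "card C = card V * card V * c"
  proof -
    have "C = {x \<in> C. (f1 x, f2 x) \<in> V \<times> V}" using assms(4) by auto
    then show ?thesis using count[of "V \<times> V"] by (simp add: card_cartesian_product)
  qed
  ultimately show ?thesis
    by (cases "card V * c = 0") (simp_all add: power2_eq_square)
qed

lemma finite_vecs: "finite (vecs q n)"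
proof -
  have "vecs q n \<subseteq> (\<lambda>f i. if i < n then f i else 0) ` ({..<n} \<rightarrow>\<^sub>E {..<q})"
  proof
    fix v assume "v \<in> vecs q n"
    then show "v \<in> (\<lambda>f i. if i < n then f i else 0) ` ({..<n} \<rightarrow>\<^sub>E {..<q})"
      by (intro image_eqI[where x = "restrict v {..<n}"]) (auto simp: vecs_def)
  qed
  then show ?thesis by (rule finite_subset) (auto intro: finite_PiE)
qed

lemma finite_mats: "finite (mats q K N)"
proof -
  have "mats q K N \<subseteq> (\<lambda>f i j. if i < K \<and> j < N then f (i, j) else 0) ` ({..<K} \<times> {..<N} \<rightarrow>\<^sub>E {..<q})"
  proof
    fix G assume "G \<in> mats q K N"
    then show "G \<in> (\<lambda>f i j. if i < K \<and> j < N then f (i, j) else 0) ` ({..<K} \<times> {..<N} \<rightarrow>\<^sub>E {..<q})"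
      by (intro image_eqI[where x = "restrict (case_prod G) ({..<K} \<times> {..<N})"])
         (auto simp: mats_def fun_eq_iff)
  qed
  then show ?thesis by (rule finite_subset) (auto intro: finite_PiE)
qed

lemma finite_ensemble: "finite (ensemble q K N)"
  unfolding ensemble_def using finite_mats finite_vecs by blast

definition codeword :: "nat \<Rightarrow> nat \<Rightarrow> nat \<Rightarrow> (nat \<Rightarrow> nat)
    \<Rightarrow> (nat \<Rightarrow> nat \<Rightarrow> nat) \<times> (nat \<Rightarrow> nat) \<Rightarrow> (nat \<Rightarrow> nat)" where
  "codeword q K N u = (\<lambda>(G, v). encode q K N G v u)"

definition ensemble_shift :: "nat \<Rightarrow> nat \<Rightarrow> nat \<Rightarrow> (nat \<Rightarrow> nat \<Rightarrow> nat) \<Rightarrow> (nat \<Rightarrow> nat)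
    \<Rightarrow> (nat \<Rightarrow> nat \<Rightarrow> nat) \<times> (nat \<Rightarrow> nat) \<Rightarrow> (nat \<Rightarrow> nat \<Rightarrow> nat) \<times> (nat \<Rightarrow> nat)" where
  "ensemble_shift q K N D E = (\<lambda>(G, v).
     (\<lambda>i j. if i < K \<and> j < N then (G i j + D i j) mod q else 0,
      \<lambda>j. if j < N then (v j + E j) mod q else 0))"

lemma codeword_in_vecs: "0 < q \<Longrightarrow> codeword q K N u x \<in> vecs q N"
  unfolding codeword_def encode_def vecs_def by (auto split: prod.splits)

lemma ensemble_shift_in_ensemble:
  "0 < q \<Longrightarrow> x \<in> ensemble q K N \<Longrightarrow> ensemble_shift q K N D E x \<in> ensemble q K N"
  unfolding ensemble_shift_def ensemble_def mats_def vecs_def by (auto split: prod.splits)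

lemma inj_on_ensemble_shift: "inj_on (ensemble_shift q K N D E) (ensemble q K N)"
proof (rule inj_onI, clarify)
  fix G v G' v'
  assume "(G, v) \<in> ensemble q K N" "(G', v') \<in> ensemble q K N"
    and eq: "ensemble_shift q K N D E (G, v) = ensemble_shift q K N D E (G', v')"
  then have bounds: "\<forall>i j. (i < K \<and> j < N \<longrightarrow> G i j < q \<and> G' i j < q) \<and>
                        (\<not> (i < K \<and> j < N) \<longrightarrow> G i j = 0 \<and> G' i j = 0)"
                    "\<forall>j. (j < N \<longrightarrow> v j < q \<and> v' j < q) \<and> (\<not> j < N \<longrightarrow> v j = 0 \<and> v' j = 0)"
    by (auto simp: ensemble_def mats_def vecs_def)
  from eq have "\<forall>i j. i < K \<and> j < N \<longrightarrow> (G i j + D i j) mod q = (G' i j + D i j) mod q"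
               "\<forall>j. j < N \<longrightarrow> (v j + E j) mod q = (v' j + E j) mod q"
    by (auto simp: ensemble_shift_def fun_eq_iff split: if_splits)
  with bounds show "G = G' \<and> v = v'"
    unfolding fun_eq_iff by (metis add_mod_cancel_less)
qed

lemma sum_mult_mod_right: "(\<Sum>i\<in>A. u i * (x i mod q)) mod q = (\<Sum>i\<in>A. u i * x i) mod (q::nat)"
proof -
  have "(\<Sum>i\<in>A. u i * (x i mod q)) mod q = (\<Sum>i\<in>A. u i * (x i mod q) mod q) mod q"
    by (simp add: mod_sum_eq)
  also have "\<dots> = (\<Sum>i\<in>A. u i * x i) mod q"
    by (simp add: mod_mult_right_eq mod_sum_eq)
  finally show ?thesis .
qed

lemma codeword_ensemble_shift:
  assumes "j < N"
  shows "codeword q K N u (ensemble_shift q K N D E x) j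
       = (codeword q K N u x j + (\<Sum>i<K. u i * D i j) + E j) mod q"
proof -
  obtain G v where x: "x = (G, v)" by fastforce
  have "codeword q K N u (ensemble_shift q K N D E x) j
      = ((\<Sum>i<K. u i * ((G i j + D i j) mod q)) + (v j + E j) mod q) mod q"
    using assms unfolding x codeword_def ensemble_shift_def encode_def by simp
  also have "\<dots> = ((\<Sum>i<K. u i * (G i j + D i j)) + (v j + E j)) mod q"
    by (simp only: mod_add_left_eq[symmetric, of "\<Sum>i<K. u i * ((G i j + D i j) mod q)"]
          sum_mult_mod_right) (simp add: mod_simps)
  also have "\<dots> = (((\<Sum>i<K. u i * G i j) + v j) + ((\<Sum>i<K. u i * D i j) + E j)) mod q"
    by (simp add: sum.distrib distrib_left add_ac)
  also have "\<dots> = (codeword q K N u x j + (\<Sum>i<K. u i * D i j) + E j) mod q"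
    using assms unfolding x codeword_def encode_def by (simp add: mod_add_left_eq add.assoc)
  finally show ?thesis .
qed

lemma codeword_ensemble_shift_eq:
  assumes "codeword q K N u x = w" "w' \<in> vecs q N"
    and "\<And>j. j < N \<Longrightarrow> [int (\<Sum>i<K. u i * D i j) + int (E j) = int (w' j) - int (w j)] (mod int q)"
  shows "codeword q K N u (ensemble_shift q K N D E x) = w'"
proof
  fix j show "codeword q K N u (ensemble_shift q K N D E x) j = w' j"
  proof (cases "j < N")
    case True
    have "[int (w j + (\<Sum>i<K. u i * D i j) + E j) = int (w' j)] (mod int q)"
      using cong_add[OF cong_refl[of "int (w j)"] assms(3)[OF True]] by (simp add: add.assoc)
    then show ?thesis
      using codeword_ensemble_shift[OF True] assms(1,2) True mod_eq_if_cong_int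
      by (simp add: vecs_def)
  next
    case False then show ?thesis
      using assms(2) unfolding codeword_def ensemble_shift_def encode_def vecs_def
      by (auto split: prod.splits)
  qed
qed

lemma sum_mult_supported_on_two:
  fixes u :: "nat \<Rightarrow> nat"
  assumes "i < K" "k < K" "i \<noteq> k"
  shows "(\<Sum>l<K. u l * ((if l = i then x else 0) + (if l = k then y else 0))) = u i * x + u k * y"
  using assms by (simp add: distrib_left sum.distrib if_distrib[of "(*) (u _)"] cong: if_cong)

lemma exists_shift_data:
  fixes um u1 u2 :: "nat \<Rightarrow> nat" and s t :: "nat \<Rightarrow> int"
  defines "a \<equiv> \<lambda>i. int (u1 i) - int (um i)" and "b \<equiv> \<lambda>i. int (u2 i) - int (um i)"
  assumes prime: "prime q" and ik: "i < K" "k < K"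
    and minor: "\<not> [a i * b k = a k * b i] (mod int q)"
  obtains D E where
    "\<And>j. [int (\<Sum>l<K. um l * D l j) + int (E j) = 0] (mod int q)"
    "\<And>j. [int (\<Sum>l<K. u1 l * D l j) + int (E j) = s j] (mod int q)"
    "\<And>j. [int (\<Sum>l<K. u2 l * D l j) + int (E j) = t j] (mod int q)"
proof -
  have "i \<noteq> k" using minor by (auto simp: mult.commute)
  have "\<forall>j. \<exists>x y. [a i * x + a k * y = s j] (mod int q) \<and> [b i * x + b k * y = t j] (mod int q)"
    using cramer_cong[OF prime minor] by metis
  then obtain X Y where XY: "\<And>j. [a i * X j + a k * Y j = s j] (mod int q)"
                            "\<And>j. [b i * X j + b k * Y j = t j] (mod int q)"
    by metis
  define D where "D = (\<lambda>l j. (if l = i then nat (X j mod int q) else 0) + (if l = k then nat (Y j mod int q) else 0))"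
  define E where "E = (\<lambda>j. nat ((- (int (um i) * X j + int (um k) * Y j)) mod int q))"
  have q0: "0 < int q" using prime_gt_0_nat[OF prime] by simp
  have effect: "[int (\<Sum>l<K. u l * D l j) + int (E j)
                 = (int (u i) - int (um i)) * X j + (int (u k) - int (um k)) * Y j] (mod int q)" for u j
  proof -
    have "int (\<Sum>l<K. u l * D l j) + int (E j)
        = int (u i) * (X j mod int q) + int (u k) * (Y j mod int q)
          + (- (int (um i) * X j + int (um k) * Y j)) mod int q"
      using sum_mult_supported_on_two[OF ik \<open>i \<noteq> k\<close>] q0 by (simp add: D_def E_def)
    also have "[\<dots> = int (u i) * X j + int (u k) * Y j + (- (int (um i) * X j + int (um k) * Y j))] (mod int q)"
      by (intro cong_add cong_scalar_left) (simp_all add: cong_def)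
    finally show ?thesis by (simp add: algebra_simps)
  qed
  show ?thesis
  proof (rule that)
    show "[int (\<Sum>l<K. um l * D l j) + int (E j) = 0] (mod int q)" for j
      using effect[of um j] by simp
    show "[int (\<Sum>l<K. u1 l * D l j) + int (E j) = s j] (mod int q)" for j
      using effect[of u1 j] XY(1)[of j] unfolding a_def by (rule cong_trans)
    show "[int (\<Sum>l<K. u2 l * D l j) + int (E j) = t j] (mod int q)" for j
      using effect[of u2 j] XY(2)[of j] unfolding b_def by (rule cong_trans)
  qed
qed

lemma qrep_in_vecs: "0 < q \<Longrightarrow> qrep q K m \<in> vecs q K"
  unfolding qrep_def vecs_def by auto

lemma mod_power_eq_sum_digits: "(m::nat) mod q ^ K = (\<Sum>i<K. (m div q ^ i) mod q * q ^ i)"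
proof (induction K)
  case (Suc K)
  have "m mod q ^ Suc K = q ^ K * (m div q ^ K mod q) + m mod q ^ K"
    using mod_mult2_eq[of m "q ^ K" q] by (simp add: mult.commute)
  then show ?case using Suc by (simp add: algebra_simps)
qed simp

lemma inj_on_qrep: "inj_on (qrep q K) {..<q ^ K}"
proof (rule inj_onI)
  fix m m' assume "m \<in> {..<q ^ K}" "m' \<in> {..<q ^ K}" "qrep q K m = qrep q K m'"
  then have "(m div q ^ i) mod q = (m' div q ^ i) mod q" if "i < K" for i
    using that by (metis qrep_def)
  then have "m mod q ^ K = m' mod q ^ K"
    by (simp add: mod_power_eq_sum_digits)
  then show "m = m'" using \<open>m \<in> {..<q ^ K}\<close> \<open>m' \<in> {..<q ^ K}\<close> by simp
qed

definition cond_ensemble :: "nat \<Rightarrow> nat \<Rightarrow> nat \<Rightarrow> (nat \<Rightarrow> nat) \<Rightarrow> (nat \<Rightarrow> nat)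
    \<Rightarrow> ((nat \<Rightarrow> nat \<Rightarrow> nat) \<times> (nat \<Rightarrow> nat)) set" where
  "cond_ensemble q K N u x0 = {x \<in> ensemble q K N. codeword q K N u x = x0}"

lemma finite_cond_ensemble: "finite (cond_ensemble q K N u x0)"
  unfolding cond_ensemble_def using finite_ensemble by simp

lemma cond_prob_eq_card_ratio:
  "cond_prob q K N m x0 E = real (card {x \<in> cond_ensemble q K N (qrep q K m) x0. case_prod E x})
                           / real (card (cond_ensemble q K N (qrep q K m) x0))"
proof -
  have "{(G, v) \<in> ensemble q K N. encode q K N G v (qrep q K m) = x0} = cond_ensemble q K N (qrep q K m) x0"
    unfolding cond_ensemble_def codeword_def by auto
  then show ?thesis unfolding cond_prob_def Let_def by (simp add: case_prod_beta')
qed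

lemma cond_prob_conj_le:
  "cond_prob q K N m x0 (\<lambda>G v. E1 G v \<and> E2 G v) \<le> cond_prob q K N m x0 E1"
proof -
  let ?C = "cond_ensemble q K N (qrep q K m) x0"
  have "card {x \<in> ?C. case_prod (\<lambda>G v. E1 G v \<and> E2 G v) x} \<le> card {x \<in> ?C. case_prod E1 x}"
    using finite_cond_ensemble by (intro card_mono) auto
  then show ?thesis
    unfolding cond_prob_eq_card_ratio by (simp add: divide_right_mono)
qed

lemma card_cond_ensemble_fibre_le:
  fixes um u1 u2 :: "nat \<Rightarrow> nat"
  assumes prime: "prime q" and ik: "i < K" "k < K"
    and minor: "\<not> [(int (u1 i) - int (um i)) * (int (u2 k) - int (um k))
                   = (int (u1 k) - int (um k)) * (int (u2 i) - int (um i))] (mod int q)"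
    and x0: "x0 \<in> vecs q N" and w': "w1' \<in> vecs q N" "w2' \<in> vecs q N"
  shows "card {x \<in> cond_ensemble q K N um x0. codeword q K N u1 x = w1 \<and> codeword q K N u2 x = w2}
       \<le> card {x \<in> cond_ensemble q K N um x0. codeword q K N u1 x = w1' \<and> codeword q K N u2 x = w2'}"
    (is "card (?fibre w1 w2) \<le> card (?fibre w1' w2')")
proof -
  obtain D E where
    DE: "\<And>j. [int (\<Sum>l<K. um l * D l j) + int (E j) = 0] (mod int q)"
        "\<And>j. [int (\<Sum>l<K. u1 l * D l j) + int (E j) = int (w1' j) - int (w1 j)] (mod int q)"
        "\<And>j. [int (\<Sum>l<K. u2 l * D l j) + int (E j) = int (w2' j) - int (w2 j)] (mod int q)"
    using exists_shift_data[where s = "\<lambda>j. int (w1' j) - int (w1 j)"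
        and t = "\<lambda>j. int (w2' j) - int (w2 j)", OF prime ik minor] by blast
  let ?h = "ensemble_shift q K N D E"
  have "?h x \<in> ?fibre w1' w2'" if "x \<in> ?fibre w1 w2" for x
  proof -
    from that have x: "x \<in> ensemble q K N" "codeword q K N um x = x0"
      "codeword q K N u1 x = w1" "codeword q K N u2 x = w2" by (auto simp: cond_ensemble_def)
    have "codeword q K N um (?h x) = x0"
      by (rule codeword_ensemble_shift_eq[OF x(2) x0]) (use DE(1) in simp)
    moreover have "codeword q K N u1 (?h x) = w1'"
      by (rule codeword_ensemble_shift_eq[OF x(3) w'(1) DE(2)])
    moreover have "codeword q K N u2 (?h x) = w2'"
      by (rule codeword_ensemble_shift_eq[OF x(4) w'(2) DE(3)])
    ultimately show ?thesis
      using ensemble_shift_in_ensemble[OF prime_gt_0_nat[OF prime] x(1)]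
      by (simp add: cond_ensemble_def)
  qed
  then have "?h ` ?fibre w1 w2 \<subseteq> ?fibre w1' w2'" by blast
  moreover have "inj_on ?h (?fibre w1 w2)"
    by (rule inj_on_subset[OF inj_on_ensemble_shift]) (auto simp: cond_ensemble_def)
  ultimately show ?thesis
    using finite_cond_ensemble by (intro card_inj_on_le) auto
qed

lemma cond_prob_pair_eq_sq:
  assumes prime: "prime q" and x0: "x0 \<in> vecs q N" and u: "u1 \<in> vecs q K" "u2 \<in> vecs q K"
    and S: "S \<subseteq> vecs q N"
    and line: "qrep q K m \<notin> span_star q K u1 u2" and ne: "qrep q K m \<noteq> u1" "u1 \<noteq> u2"
  shows "cond_prob q K N m x0 (\<lambda>G v. encode q K N G v u1 \<in> S \<and> encode q K N G v u2 \<in> S)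
       = cond_prob q K N m x0 (\<lambda>G v. encode q K N G v u1 \<in> S) ^ 2"
proof -
  let ?C = "cond_ensemble q K N (qrep q K m) x0"
  let ?fibre = "\<lambda>w1 w2. {x \<in> ?C. codeword q K N u1 x = w1 \<and> codeword q K N u2 x = w2}"
  have q0: "0 < q" using prime_gt_0_nat[OF prime] .
  obtain i k where ik: "i < K" "k < K" and minor:
    "\<not> [(int (u1 i) - int (qrep q K m i)) * (int (u2 k) - int (qrep q K m k))
        = (int (u1 k) - int (qrep q K m k)) * (int (u2 i) - int (qrep q K m i))] (mod int q)"
    using nonzero_minor_if_not_in_span_star[OF prime qrep_in_vecs[OF q0] u line ne] by blast
  note fibre_le = card_cond_ensemble_fibre_le[OF prime ik minor x0]
  have "real (card {x \<in> ?C. codeword q K N u1 x \<in> S \<and> codeword q K N u2 x \<in> S}) / real (card ?C)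
      = (real (card {x \<in> ?C. codeword q K N u1 x \<in> S}) / real (card ?C))\<^sup>2"
  proof (rule ratio_pair_preimage_eq_sq[OF finite_cond_ensemble finite_vecs S])
    show "codeword q K N u1 x \<in> vecs q N \<and> codeword q K N u2 x \<in> vecs q N" for x
      using codeword_in_vecs[OF q0] by blast
    show "card (?fibre w1 w2) = card (?fibre x0 x0)" if "w1 \<in> vecs q N" "w2 \<in> vecs q N" for w1 w2
      using fibre_le[OF that] fibre_le[OF x0 x0] by (simp add: le_antisym)
  qed
  then show ?thesis
    unfolding cond_prob_eq_card_ratio by (simp add: codeword_def case_prod_beta')
qed

theorem lemma1:
  fixes q K N :: nat
    and P :: "(nat \<Rightarrow> nat) \<Rightarrow> 'y::finite \<Rightarrow> real"
    and m m' m'' :: nat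
    and x0 :: "nat \<Rightarrow> nat"
    and y :: "'y"
  assumes "prime q" and "1 \<le> K" and "K < N" and "q ^ K > 2"
    and "\<forall>x\<in>vecs q N. (\<forall>z. P x z \<ge> 0) \<and> (\<Sum>z\<in>UNIV. P x z) = 1"
    and "m < q ^ K" and "m' < q ^ K" and "m'' < q ^ K"
    and "m \<noteq> m'" and "m \<noteq> m''" and "m' \<noteq> m''"
    and "x0 \<in> vecs q N"
  defines "A' \<equiv> (\<lambda>G v. encode q K N G v (qrep q K m') \<in> Aset q N P x0 y)"
    and "A'' \<equiv> (\<lambda>G v. encode q K N G v (qrep q K m'') \<in> Aset q N P x0 y)"
    and "\<alpha> \<equiv> cond_prob q K N m x0 (\<lambda>G v. encode q K N G v (qrep q K m') \<in> Aset q N P x0 y)"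
  shows "(qrep q K m \<notin> span_star q K (qrep q K m') (qrep q K m'') \<longrightarrow>
            cond_prob q K N m x0 (\<lambda>G v. A' G v \<and> A'' G v) = \<alpha> ^ 2)
       \<and> (qrep q K m \<in> span_star q K (qrep q K m') (qrep q K m'') \<longrightarrow>
            cond_prob q K N m x0 (\<lambda>G v. A' G v \<and> A'' G v) \<le> \<alpha>)
       \<and> card (span_star q K (qrep q K m') (qrep q K m'')) = q"
proof -
  have q0: "0 < q" using prime_gt_0_nat[OF \<open>prime q\<close>] .
  have u: "qrep q K m' \<in> vecs q K" "qrep q K m'' \<in> vecs q K"
    using qrep_in_vecs[OF q0] by blast+
  have ne: "qrep q K m \<noteq> qrep q K m'" "qrep q K m' \<noteq> qrep q K m''"
    using inj_onD[OF inj_on_qrep] assms(6-11) by blast+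
  have "Aset q N P x0 y \<subseteq> vecs q N" by (auto simp: Aset_def)
  then have "qrep q K m \<notin> span_star q K (qrep q K m') (qrep q K m'') \<Longrightarrow>
      cond_prob q K N m x0 (\<lambda>G v. A' G v \<and> A'' G v) = \<alpha> ^ 2"
    unfolding A'_def A''_def \<alpha>_def
    by (rule cond_prob_pair_eq_sq[OF \<open>prime q\<close> \<open>x0 \<in> vecs q N\<close> u _ _ ne])
  moreover have "cond_prob q K N m x0 (\<lambda>G v. A' G v \<and> A'' G v) \<le> \<alpha>"
    unfolding \<alpha>_def A'_def by (rule cond_prob_conj_le)
  ultimately show ?thesis
    using card_span_star[OF \<open>prime q\<close> u ne(2)] by blast
qed

end
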